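(* Let $N\ge1$ and $K(x,y)=2\sum_{j=0}^{N-1}\sin\left(\frac{2j+1}{2}x\right)\sin\left(\frac{2j+1}{2}y\right)$. For $a,b,c,d\in\mathbb{Z}$ define $\Pi(a)=\frac1\pi\int_0^\pi K(x,x)\cos(ax)\,\mathrm{d}x$, $\Pi(a,b)=\frac1{\pi^2}\int_0^\pi\int_0^\pi K(x,y)^2\cos(ax)\cos(by)\,\mathrm{d}x\,\mathrm{d}y$, $\Pi(a,b,c)=\frac1{\pi^3}\int_{[0,\pi]^3}K(x,y)K(y,z)K(z,x)\cos(ax)\cos(by)\cos(cz)\,\mathrm{d}x\,\mathrm{d}y\,\mathrm{d}z$, $\Pi(a,b,c,d)=\frac1{\pi^4}\int_{[0,\pi]^4}K(x,y)K(y,z)K(z,w)K(w,x)\cos(ax)\cos(by)\cos(cz)\cos(dw)\,\mathrm{d}x\,\mathrm{d}y\,\mathrm{d}z\,\mathrm{d}w$, and let $\varepsilon(a)=\mathbb{1}_{\{1\le a\le 2N-1,\ a\text{ odd}\}}$, $\alpha(a,b,c)=(\min\{a,N\}+\min\{b,N\}-c)^+$ where $x^+=\max\{x,0\}$. Then $\Pi(0)=\Pi(0,0)=N$, and for all integers $k,\ell\ge1$: $\Pi(k)=-\frac{\varepsilon(k)}2$; $\Pi(k,\ell)=\frac{(2N-k)^+}{4}$ if $k=\ell$ and $\Pi(k,\ell)=-\frac{\varepsilon(k+\ell)}{2}$ if $k\ne\ell$; $\Pi(0,k)=-\frac{\varepsilon(k)}{2}$; $\Pi(k,\ell,\ell)=\frac{(2N-k)^+}{8}$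 if $k=2\ell$ and $\Pi(k,\ell,\ell)=-\frac{3\varepsilon(k+2\ell)+\varepsilon(k)\varepsilon(|2\ell-k|)}{8}$ if $k\ne 2\ell$; $\Pi(k,\ell,k+\ell)=\frac{(N-k-\ell)^+}{4}+\frac{\alpha(k+\ell,\ell,k+\ell)+\alpha(k+\ell,k,k+\ell)}{8}$; $\Pi(0,k,k)=\frac{(2N-k)^+}{4}$ and $\Pi(k,k,k,k)=\frac{(N-k)^+}{4}+\frac{(2N-k)^+}{16}$; and if $k\ne\ell$, $\Pi(k,k,\ell,\ell)=\frac{(N-\max\{k,\ell\})^++(N-k-\ell)^+}{8}+\frac{\alpha(\min\{k,\ell\},\max\{k,\ell\},\max\{k,\ell\})}{16}+\frac{\alpha(k+\ell,\ell,k+\ell)+\alpha(k+\ell,k,k+\ell)+\alpha(\ell,\ell-k,\ell)+\alpha(k,k-\ell,k)}{16}$, $\Pi(k,\ell,k,\ell)=\frac{(N-k-\ell)^+}{4}+\frac{\alpha(k+\ell,\min\{k,\ell\},k+\ell)}{4}+\frac{\alpha(k,k,k+\ell)+\alpha(\ell,\ell,k+\ell)}{8}$.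
   Context: $\mathbb{1}_{\{\cdot\}}$ denotes the indicator function. *)

theory Defs
  imports "HOL-Analysis.Analysis"
begin

definition K :: "nat \<Rightarrow> real \<Rightarrow> real \<Rightarrow> real" where
  "K N x y = 2 * (\<Sum>j<N. sin ((2 * real j + 1) / 2 * x) * sin ((2 * real j + 1) / 2 * y))"

text \<open>Multiple integrals over [0,pi]^n, written as iterated integrals
  (integrands are continuous, so this agrees with the integral over the cube).\<close>
definition Pi1 :: "nat \<Rightarrow> int \<Rightarrow> real" where
  "Pi1 N a = (1 / pi) * integral {0..pi} (\<lambda>x. K N x x * cos (of_int a * x))"

definition Pi2 :: "nat \<Rightarrow> int \<Rightarrow> int \<Rightarrow> real" where
  "Pi2 N a b = (1 / pi ^ 2) * integral {0..pi} (\<lambda>x. integral {0..pi} (\<lambda>y.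
      (K N x y)\<^sup>2 * cos (of_int a * x) * cos (of_int b * y)))"

definition Pi3 :: "nat \<Rightarrow> int \<Rightarrow> int \<Rightarrow> int \<Rightarrow> real" where
  "Pi3 N a b c = (1 / pi ^ 3) * integral {0..pi} (\<lambda>x. integral {0..pi} (\<lambda>y. integral {0..pi} (\<lambda>z.
      K N x y * K N y z * K N z x * cos (of_int a * x) * cos (of_int b * y) * cos (of_int c * z))))"

definition Pi4 :: "nat \<Rightarrow> int \<Rightarrow> int \<Rightarrow> int \<Rightarrow> int \<Rightarrow> real" where
  "Pi4 N a b c d = (1 / pi ^ 4) * integral {0..pi} (\<lambda>x. integral {0..pi} (\<lambda>y. integral {0..pi} (\<lambda>z.
      integral {0..pi} (\<lambda>w.
      K N x y * K N y z * K N z w * K N w x *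
      cos (of_int a * x) * cos (of_int b * y) * cos (of_int c * z) * cos (of_int d * w)))))"

definition pp :: "int \<Rightarrow> int" where
  "pp x = max x 0"

definition eps :: "nat \<Rightarrow> int \<Rightarrow> real" where
  "eps N a = (if 1 \<le> a \<and> a \<le> 2 * int N - 1 \<and> odd a then 1 else 0)"

definition alpha :: "nat \<Rightarrow> int \<Rightarrow> int \<Rightarrow> int \<Rightarrow> int" where
  "alpha N a b c = pp (min a (int N) + min b (int N) - c)"

end

theory Submission
  imports Defs
begin

(* Write K(x,y) = sum_{-N <= u < N} s_u(x) s_u(y) with s_u(t) = sin((u + 1/2) t) (half_sin), using
  s_{-1-u} = - s_u. Since the integral of cos(a t) s_u(t) s_v(t) over [0, pi] is pi T_a(u,v) with
  T_a(u,v) = (D_a(u,v) - D_a(u,-1-v)) / 4 (cos_mat) and D_a(u,v) = [v = u + a] + [v = u - a]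
  (shift_mat), integrating out one variable after the other turns every Pi into a trace of a product
  of the matrices T_a.
  As T_a is odd under u |-> -1-u, such a trace reduces to counting walks with steps +-a, +-b, ...
  inside [-N, N) that either close up or end at the mirror image -1-v of their start; the mirrored
  walks cannot exist when the sum of the steps is even, and all remaining counts are lengths of
  integer intervals. *)

abbreviation idx :: "int \<Rightarrow> int set" where
  "idx n \<equiv> {-n..<n}"

lemma sum_idx_reflect: "(\<Sum>v\<in>idx n. f v) = (\<Sum>v\<in>idx n. f (-1 - v))"
  by (rule sum.reindex_bij_betw[symmetric], rule bij_betwI[where g = "\<lambda>v. -1 - v"]) auto

lemma integral_sum_continuous:
  fixes f :: "'i \<Rightarrow> real \<Rightarrow> real"
  assumes "finite A" "\<And>i. i \<in> A \<Longrightarrow> continuous_on {a..b} (f i)"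
  shows "integral {a..b} (\<lambda>t. \<Sum>i\<in>A. f i t) = (\<Sum>i\<in>A. integral {a..b} (f i))"
  using assms by (auto intro!: Henstock_Kurzweil_Integration.integral_sum integrable_continuous_interval)

definition half_sin :: "int \<Rightarrow> real \<Rightarrow> real" where
  "half_sin u t = sin ((of_int u + 1/2) * t)"

lemma half_sin_reflect: "half_sin (-1 - u) t = - half_sin u t"
proof -
  have "(of_int (-1 - u) + 1/2) * t = - ((of_int u + 1/2) * t)"
    by (simp add: algebra_simps)
  then show ?thesis
    unfolding half_sin_def by simp
qed

lemma continuous_on_half_sin [continuous_intros]: "continuous_on S (half_sin u)"
  unfolding half_sin_def by (intro continuous_intros)

lemma K_eq_sum_half_sin: "K N x y = (\<Sum>u\<in>idx (int N). half_sin u x * half_sin u y)"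
proof -
  let ?f = "\<lambda>u. half_sin u x * half_sin u y"
  have "(\<Sum>u\<in>idx (int N). ?f u) = (\<Sum>u\<in>{-int N..<0}. ?f u) + (\<Sum>u\<in>{0..<int N}. ?f u)"
    by (subst sum.union_disjoint[symmetric]) (auto intro: sum.cong)
  also have "(\<Sum>u\<in>{-int N..<0}. ?f u) = (\<Sum>u\<in>{0..<int N}. ?f (-1 - u))"
    by (rule sum.reindex_bij_betw[symmetric], rule bij_betwI[where g = "\<lambda>v. -1 - v"]) auto
  also have "\<dots> = (\<Sum>u\<in>{0..<int N}. ?f u)"
    by (simp add: half_sin_reflect)
  also have "(\<Sum>u\<in>{0..<int N}. ?f u) = (\<Sum>j<N. ?f (int j))"
  proof -
    have "{0..<int N} = int ` {..<N}"
      by (simp add: image_int_atLeastLessThan atLeast0LessThan[symmetric])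
    then show ?thesis
      by (simp add: sum.reindex)
  qed
  finally show ?thesis
    unfolding K_def half_sin_def by (simp add: add_divide_distrib)
qed

lemma K_sym: "K N x y = K N y x"
  unfolding K_def by (simp add: mult.commute)

definition shift_mat :: "int \<Rightarrow> int \<Rightarrow> int \<Rightarrow> real" where
  "shift_mat a u v = (if v = u + a then 1 else 0) + (if v = u - a then 1 else 0)"

definition cos_mat :: "int \<Rightarrow> int \<Rightarrow> int \<Rightarrow> real" where
  "cos_mat a u v = (shift_mat a u v - shift_mat a u (-1 - v)) / 4"

lemma cos_mat_sym: "cos_mat a u v = cos_mat a v u"
  unfolding cos_mat_def shift_mat_def by auto

lemma integral_cos_int: "integral {0..pi} (\<lambda>t. cos (of_int q * t)) = (if q = 0 then pi else 0)"
proof (cases "q = 0")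
  case False
  have "((\<lambda>t. cos (of_int q * t)) has_integral
          (sin (of_int q * pi) / of_int q - sin (of_int q * 0) / of_int q)) {0..pi}"
    using False
    by (intro fundamental_theorem_of_calculus)
       (auto intro!: derivative_eq_intros simp: has_real_derivative_iff_has_vector_derivative[symmetric])
  then show ?thesis
    using False by (simp add: integral_unique sin_times_pi_eq_0[of "of_int q", simplified])
qed simp

lemma cos_mult_half_sin_mult_half_sin:
  "cos (of_int a * t) * (half_sin u t * half_sin v t) =
   (cos (of_int (a - (u - v)) * t) + cos (of_int (a + (u - v)) * t)
    - cos (of_int (a - (u + v + 1)) * t) - cos (of_int (a + (u + v + 1)) * t)) / 4"
proof -
  have cos_mult_cos: "cos (of_int a * t) * cos (of_int m * t)
      = (cos (of_int (a - m) * t) + cos (of_int (a + m) * t)) / 2" for m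
    by (simp add: cos_times_cos algebra_simps)
  have "half_sin u t * half_sin v t = (cos (of_int (u - v) * t) - cos (of_int (u + v + 1) * t)) / 2"
    unfolding half_sin_def sin_times_sin by (simp add: algebra_simps)
  then have "cos (of_int a * t) * (half_sin u t * half_sin v t)
      = (cos (of_int a * t) * cos (of_int (u - v) * t)
         - cos (of_int a * t) * cos (of_int (u + v + 1) * t)) / 2"
    by (simp only: times_divide_eq_right right_diff_distrib)
  then show ?thesis
    unfolding cos_mult_cos by argo
qed

lemma integral_cos_half_sin_half_sin:
  "integral {0..pi} (\<lambda>t. cos (of_int a * t) * (half_sin u t * half_sin v t)) = pi * cos_mat a u v"
proof -
  have integrable: "(\<lambda>t. cos (of_int q * t)) integrable_on {0..pi}" for q
    by (intro integrable_continuous_interval continuous_intros)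
  show ?thesis
    unfolding cos_mult_half_sin_mult_half_sin
    by (simp only: integral_divide integral_diff integral_add integrable_diff integrable_add integrable
                   integral_cos_int)
       (auto simp: cos_mat_def shift_mat_def algebra_simps)
qed

abbreviation mat_mul :: "int \<Rightarrow> (int \<Rightarrow> int \<Rightarrow> real) \<Rightarrow> (int \<Rightarrow> int \<Rightarrow> real) \<Rightarrow> int \<Rightarrow> int \<Rightarrow> real" where
  "mat_mul n A B u v \<equiv> \<Sum>q\<in>idx n. A u q * B q v"

definition mat_kernel :: "int \<Rightarrow> (int \<Rightarrow> int \<Rightarrow> real) \<Rightarrow> real \<Rightarrow> real \<Rightarrow> real" where
  "mat_kernel n M x y = (\<Sum>u\<in>idx n. \<Sum>v\<in>idx n. M u v * (half_sin u x * half_sin v y))"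

lemma K_eq_mat_kernel: "K N x y = mat_kernel (int N) (\<lambda>u v. of_bool (u = v)) x y"
  unfolding K_eq_sum_half_sin mat_kernel_def by simp

lemma integral_K_cos_mat_kernel:
  "integral {0..pi} (\<lambda>w. K N z w * cos (of_int d * w) * mat_kernel (int N) M w x) =
   pi * mat_kernel (int N) (mat_mul (int N) (cos_mat d) M) z x"
proof -
  let ?I = "idx (int N)"
  have "K N z w * cos (of_int d * w) * mat_kernel (int N) M w x =
    (\<Sum>p\<in>?I. \<Sum>u\<in>?I. \<Sum>v\<in>?I. (half_sin u z * M p v * half_sin v x) *
        (cos (of_int d * w) * (half_sin p w * half_sin u w)))" for w
    unfolding K_eq_sum_half_sin mat_kernel_def by (simp add: sum_distrib_left sum_distrib_right mult_ac)
  then have "integral {0..pi} (\<lambda>w. K N z w * cos (of_int d * w) * mat_kernel (int N) M w x) =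
     (\<Sum>p\<in>?I. \<Sum>u\<in>?I. \<Sum>v\<in>?I. (half_sin u z * M p v * half_sin v x) * (pi * cos_mat d p u))"
    by (simp add: integral_sum_continuous continuous_intros integral_cos_half_sin_half_sin)
  also have "\<dots> = (\<Sum>u\<in>?I. \<Sum>p\<in>?I. \<Sum>v\<in>?I. (half_sin u z * M p v * half_sin v x) * (pi * cos_mat d p u))"
    by (rule sum.swap)
  also have "\<dots> = (\<Sum>u\<in>?I. \<Sum>v\<in>?I. \<Sum>p\<in>?I. (half_sin u z * M p v * half_sin v x) * (pi * cos_mat d p u))"
    by (intro sum.cong refl sum.swap)
  also have "\<dots> = pi * mat_kernel (int N) (mat_mul (int N) (cos_mat d) M) z x"
    unfolding mat_kernel_def
    by (simp add: sum_distrib_left sum_distrib_right mult_ac cos_mat_sym[of d _ u for u])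
  finally show ?thesis .
qed

lemma integral_K_cos_K:
  "integral {0..pi} (\<lambda>w. K N z w * cos (of_int d * w) * K N w x) = pi * mat_kernel (int N) (cos_mat d) z x"
  unfolding K_eq_mat_kernel[of N _ x] integral_K_cos_mat_kernel by (simp add: mat_kernel_def)

lemma integral_mat_kernel_diag_cos:
  "integral {0..pi} (\<lambda>x. mat_kernel (int N) M x x * cos (of_int a * x)) =
   pi * (\<Sum>u\<in>idx (int N). \<Sum>v\<in>idx (int N). M u v * cos_mat a u v)"
proof -
  have "mat_kernel (int N) M x x * cos (of_int a * x) =
    (\<Sum>u\<in>idx (int N). \<Sum>v\<in>idx (int N). M u v * (cos (of_int a * x) * (half_sin u x * half_sin v x)))" for x
    unfolding mat_kernel_def by (simp add: sum_distrib_left sum_distrib_right mult_ac)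
  then have "integral {0..pi} (\<lambda>x. mat_kernel (int N) M x x * cos (of_int a * x)) =
    (\<Sum>u\<in>idx (int N). \<Sum>v\<in>idx (int N). M u v * (pi * cos_mat a u v))"
    by (simp add: integral_sum_continuous continuous_intros integral_cos_half_sin_half_sin)
  then show ?thesis
    by (simp add: sum_distrib_left mult_ac)
qed

lemma Pi1_eq_trace: "Pi1 N a = (\<Sum>u\<in>idx (int N). cos_mat a u u)"
proof -
  have "Pi1 N a = 1 / pi * (pi * (\<Sum>u\<in>idx (int N). \<Sum>v\<in>idx (int N). of_bool (u = v) * cos_mat a u v))"
    unfolding Pi1_def K_eq_mat_kernel integral_mat_kernel_diag_cos ..
  then show ?thesis
    by simp
qed

lemma Pi2_eq_trace:
  "Pi2 N a b = (\<Sum>u\<in>idx (int N). \<Sum>v\<in>idx (int N). cos_mat b u v * cos_mat a u v)"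
proof -
  have square: "(\<lambda>y. (K N x y)\<^sup>2 * cos (of_int a * x) * cos (of_int b * y)) =
        (\<lambda>y. cos (of_int a * x) * (K N x y * cos (of_int b * y) * K N y x))" for x
    by (simp add: fun_eq_iff power2_eq_square K_sym[of N _ x] mult_ac)
  have "Pi2 N a b =
      1 / pi^2 * integral {0..pi} (\<lambda>x. pi * (mat_kernel (int N) (cos_mat b) x x * cos (of_int a * x)))"
    unfolding Pi2_def square integral_mult_right integral_K_cos_K by (simp add: mult_ac)
  then show ?thesis
    by (simp add: integral_mat_kernel_diag_cos power2_eq_square)
qed

lemma Pi3_eq_trace:
  "Pi3 N a b c = (\<Sum>u\<in>idx (int N). \<Sum>v\<in>idx (int N).
     mat_mul (int N) (cos_mat b) (cos_mat c) u v * cos_mat a u v)"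
proof -
  let ?M = "mat_mul (int N) (cos_mat b) (cos_mat c)"
  have regroup_z:
    "K N x y * K N y z * K N z x * cos (of_int a * x) * cos (of_int b * y) * cos (of_int c * z) =
      (K N x y * cos (of_int a * x) * cos (of_int b * y)) * (K N y z * cos (of_int c * z) * K N z x)"
    for x y z
    by (simp add: mult_ac)
  have regroup_y:
    "K N x y * cos (of_int a * x) * cos (of_int b * y) * (pi * mat_kernel (int N) (cos_mat c) y x) =
      (pi * cos (of_int a * x)) * (K N x y * cos (of_int b * y) * mat_kernel (int N) (cos_mat c) y x)"
    for x y
    by (simp add: mult_ac)
  have "Pi3 N a b c =
      1 / pi^3 * integral {0..pi} (\<lambda>x. pi^2 * (mat_kernel (int N) ?M x x * cos (of_int a * x)))"
    unfolding Pi3_def regroup_z integral_mult_right integral_K_cos_K regroup_y integral_K_cos_mat_kernel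
    by (simp add: power2_eq_square mult_ac)
  then show ?thesis
    by (simp add: integral_mat_kernel_diag_cos power3_eq_cube power2_eq_square)
qed

lemma Pi4_eq_trace:
  "Pi4 N a b c d = (\<Sum>u\<in>idx (int N). \<Sum>v\<in>idx (int N).
     mat_mul (int N) (cos_mat b) (mat_mul (int N) (cos_mat c) (cos_mat d)) u v * cos_mat a u v)"
proof -
  let ?M = "mat_mul (int N) (cos_mat c) (cos_mat d)"
  let ?M' = "mat_mul (int N) (cos_mat b) ?M"
  have regroup_w: "K N x y * K N y z * K N z w * K N w x *
      cos (of_int a * x) * cos (of_int b * y) * cos (of_int c * z) * cos (of_int d * w) =
      (K N x y * K N y z * cos (of_int a * x) * cos (of_int b * y) * cos (of_int c * z)) *
      (K N z w * cos (of_int d * w) * K N w x)" for x y z w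
    by (simp add: mult_ac)
  have regroup_z: "K N x y * K N y z * cos (of_int a * x) * cos (of_int b * y) * cos (of_int c * z) *
      (pi * mat_kernel (int N) (cos_mat d) z x) =
      (pi * K N x y * cos (of_int a * x) * cos (of_int b * y)) *
      (K N y z * cos (of_int c * z) * mat_kernel (int N) (cos_mat d) z x)" for x y z
    by (simp add: mult_ac)
  have regroup_y:
    "pi * K N x y * cos (of_int a * x) * cos (of_int b * y) * (pi * mat_kernel (int N) ?M y x) =
      (pi^2 * cos (of_int a * x)) * (K N x y * cos (of_int b * y) * mat_kernel (int N) ?M y x)"
    for x y
    by (simp add: power2_eq_square mult_ac)
  have "Pi4 N a b c d =
      1 / pi^4 * integral {0..pi} (\<lambda>x. pi^3 * (mat_kernel (int N) ?M' x x * cos (of_int a * x)))"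
    unfolding Pi4_def regroup_w integral_mult_right integral_K_cos_K regroup_z integral_K_cos_mat_kernel
      regroup_y
    by (simp add: power2_eq_square power3_eq_cube mult_ac)
  then show ?thesis
    by (simp add: integral_mat_kernel_diag_cos power3_eq_cube power4_eq_xxxx)
qed

lemma cos_mat_reflect_left: "cos_mat a (-1 - u) v = - cos_mat a u v"
  unfolding cos_mat_def shift_mat_def by auto

lemma sum_cos_mat_reflect_left:
  "(\<Sum>q\<in>idx n. cos_mat a (-1 - u) q * F q) = - (\<Sum>q\<in>idx n. cos_mat a u q * F q)"
  by (simp add: cos_mat_reflect_left sum_negf[symmetric])

lemma sum_cos_mat_mult_odd:
  assumes "\<And>v. v \<in> idx n \<Longrightarrow> F (-1 - v) = - F v"
  shows "(\<Sum>v\<in>idx n. cos_mat a u v * F v) = (\<Sum>v\<in>idx n. shift_mat a u v * F v) / 2"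
proof -
  have "(\<Sum>v\<in>idx n. shift_mat a u (-1 - v) * F v) = (\<Sum>v\<in>idx n. shift_mat a u v * F (-1 - v))"
    by (subst sum_idx_reflect) simp
  also have "\<dots> = - (\<Sum>v\<in>idx n. shift_mat a u v * F v)"
    by (simp add: assms sum_negf[symmetric])
  finally have mirrored:
    "(\<Sum>v\<in>idx n. shift_mat a u (-1 - v) * F v) = - (\<Sum>v\<in>idx n. shift_mat a u v * F v)" .
  have "(\<Sum>v\<in>idx n. cos_mat a u v * F v) =
      ((\<Sum>v\<in>idx n. shift_mat a u v * F v) - (\<Sum>v\<in>idx n. shift_mat a u (-1 - v) * F v)) / 4"
    unfolding cos_mat_def by (simp add: sum_subtractf[symmetric] sum_divide_distrib left_diff_distrib)
  with mirrored show ?thesis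
    by simp
qed

lemma sum_shift_mat_mult:
  "(\<Sum>v\<in>idx n. shift_mat a u v * F v) =
    of_bool (u + a \<in> idx n) * F (u + a) + of_bool (u - a \<in> idx n) * F (u - a)"
  unfolding shift_mat_def
  by (simp add: distrib_right sum.distrib if_distrib[of "\<lambda>x. x * _"] sum.delta' cong: if_cong)

lemma trace1_cos_mat:
  "(\<Sum>u\<in>idx n. cos_mat a u u) = ((\<Sum>v\<in>idx n. shift_mat a v v) - (\<Sum>v\<in>idx n. shift_mat a v (-1 - v))) / 4"
  unfolding cos_mat_def by (simp only: sum_subtractf[symmetric] sum_divide_distrib)

lemma trace2_cos_mat:
  "(\<Sum>u\<in>idx n. \<Sum>v\<in>idx n. cos_mat b u v * cos_mat a u v) =
   ((\<Sum>v\<in>idx n. mat_mul n (shift_mat a) (shift_mat b) v v)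
    - (\<Sum>v\<in>idx n. mat_mul n (shift_mat a) (shift_mat b) v (-1 - v))) / 8"
proof -
  have "(\<Sum>u\<in>idx n. \<Sum>v\<in>idx n. cos_mat b u v * cos_mat a u v) =
      (\<Sum>v\<in>idx n. mat_mul n (cos_mat a) (cos_mat b) v v)"
    by (subst sum.swap) (simp add: cos_mat_sym mult.commute)
  also have "\<dots> = (\<Sum>v\<in>idx n. mat_mul n (shift_mat a) (cos_mat b) v v / 2)"
    by (intro sum.cong refl sum_cos_mat_mult_odd) (simp add: cos_mat_reflect_left)
  also have "\<dots> = ((\<Sum>v\<in>idx n. mat_mul n (shift_mat a) (shift_mat b) v v)
    - (\<Sum>v\<in>idx n. mat_mul n (shift_mat a) (shift_mat b) v (-1 - v))) / 8"
    unfolding cos_mat_def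
    by (simp add: right_diff_distrib sum_subtractf sum_divide_distrib[symmetric] diff_divide_distrib)
  finally show ?thesis .
qed

lemma trace3_cos_mat:
  "(\<Sum>u\<in>idx n. \<Sum>v\<in>idx n. mat_mul n (cos_mat b) (cos_mat c) u v * cos_mat a u v) =
   ((\<Sum>v\<in>idx n. mat_mul n (shift_mat a) (mat_mul n (shift_mat b) (shift_mat c)) v v)
    - (\<Sum>v\<in>idx n. mat_mul n (shift_mat a) (mat_mul n (shift_mat b) (shift_mat c)) v (-1 - v))) / 16"
proof -
  have "(\<Sum>u\<in>idx n. \<Sum>v\<in>idx n. mat_mul n (cos_mat b) (cos_mat c) u v * cos_mat a u v) =
     (\<Sum>v\<in>idx n. mat_mul n (cos_mat a) (mat_mul n (cos_mat b) (cos_mat c)) v v)"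
    by (subst sum.swap) (simp add: cos_mat_sym mult.commute)
  also have "\<dots> = (\<Sum>v\<in>idx n. mat_mul n (shift_mat a) (mat_mul n (cos_mat b) (cos_mat c)) v v / 2)"
    by (intro sum.cong refl sum_cos_mat_mult_odd) (simp add: sum_cos_mat_reflect_left)
  also have "\<dots> = (\<Sum>v\<in>idx n. (\<Sum>u\<in>idx n. shift_mat a v u * (mat_mul n (shift_mat b) (cos_mat c) u v / 2)) / 2)"
    by (intro sum.cong refl arg_cong2[where f = "(/)"] arg_cong2[where f = "(*)"] sum_cos_mat_mult_odd)
       (simp add: cos_mat_reflect_left)
  also have "\<dots> = ((\<Sum>v\<in>idx n. mat_mul n (shift_mat a) (mat_mul n (shift_mat b) (shift_mat c)) v v)
    - (\<Sum>v\<in>idx n. mat_mul n (shift_mat a) (mat_mul n (shift_mat b) (shift_mat c)) v (-1 - v))) / 16"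
    unfolding cos_mat_def
    by (simp add: right_diff_distrib sum_subtractf sum_divide_distrib[symmetric] diff_divide_distrib)
  finally show ?thesis .
qed

lemma trace4_cos_mat:
  "(\<Sum>u\<in>idx n. \<Sum>v\<in>idx n.
      mat_mul n (cos_mat b) (mat_mul n (cos_mat c) (cos_mat d)) u v * cos_mat a u v) =
   ((\<Sum>v\<in>idx n.
       mat_mul n (shift_mat a) (mat_mul n (shift_mat b) (mat_mul n (shift_mat c) (shift_mat d))) v v)
    - (\<Sum>v\<in>idx n.
       mat_mul n (shift_mat a) (mat_mul n (shift_mat b) (mat_mul n (shift_mat c) (shift_mat d))) v (-1 - v)))
   / 32"
proof -
  have "(\<Sum>u\<in>idx n. \<Sum>v\<in>idx n.
      mat_mul n (cos_mat b) (mat_mul n (cos_mat c) (cos_mat d)) u v * cos_mat a u v) =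
    (\<Sum>v\<in>idx n. mat_mul n (cos_mat a) (mat_mul n (cos_mat b) (mat_mul n (cos_mat c) (cos_mat d))) v v)"
    by (subst sum.swap) (simp add: cos_mat_sym mult.commute)
  also have "\<dots> =
    (\<Sum>v\<in>idx n. mat_mul n (shift_mat a) (mat_mul n (cos_mat b) (mat_mul n (cos_mat c) (cos_mat d))) v v / 2)"
    by (intro sum.cong refl sum_cos_mat_mult_odd) (simp add: sum_cos_mat_reflect_left)
  also have "\<dots> = (\<Sum>v\<in>idx n. (\<Sum>u\<in>idx n.
      shift_mat a v u * (mat_mul n (shift_mat b) (mat_mul n (cos_mat c) (cos_mat d)) u v / 2)) / 2)"
    by (intro sum.cong refl arg_cong2[where f = "(/)"] arg_cong2[where f = "(*)"] sum_cos_mat_mult_odd)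
       (simp add: sum_cos_mat_reflect_left)
  also have "\<dots> = (\<Sum>v\<in>idx n. (\<Sum>u\<in>idx n. shift_mat a v u *
      ((\<Sum>q\<in>idx n. shift_mat b u q * (mat_mul n (shift_mat c) (cos_mat d) q v / 2)) / 2)) / 2)"
    by (intro sum.cong refl arg_cong2[where f = "(/)"] arg_cong2[where f = "(*)"] sum_cos_mat_mult_odd)
       (simp add: cos_mat_reflect_left)
  also have "\<dots> =
   ((\<Sum>v\<in>idx n.
       mat_mul n (shift_mat a) (mat_mul n (shift_mat b) (mat_mul n (shift_mat c) (shift_mat d))) v v)
    - (\<Sum>v\<in>idx n.
       mat_mul n (shift_mat a) (mat_mul n (shift_mat b) (mat_mul n (shift_mat c) (shift_mat d))) v (-1 - v)))
   / 32"
    unfolding cos_mat_def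
    by (simp add: right_diff_distrib sum_subtractf sum_divide_distrib[symmetric] diff_divide_distrib)
  finally show ?thesis .
qed

lemma shift_mat_eq_0_if_odd: "odd (v - u + a) \<Longrightarrow> shift_mat a u v = 0"
  unfolding shift_mat_def by auto

lemma shift_mat_reflect2_eq_0:
  assumes "even (a + b)"
  shows "(\<Sum>v\<in>idx n. mat_mul n (shift_mat a) (shift_mat b) v (-1 - v)) = 0"
proof -
  have "shift_mat a v u * shift_mat b u (-1 - v) = 0" for v u
    using shift_mat_eq_0_if_odd[of u v a] shift_mat_eq_0_if_odd[of "-1 - v" u b] assms by fastforce
  then show ?thesis
    by (simp only: sum.neutral_const)
qed

lemma shift_mat_reflect3_eq_0:
  assumes "even (a + b + c)"
  shows "(\<Sum>v\<in>idx n. mat_mul n (shift_mat a) (mat_mul n (shift_mat b) (shift_mat c)) v (-1 - v)) = 0"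
proof -
  have "shift_mat a v u * (shift_mat b u q * shift_mat c q (-1 - v)) = 0" for v u q
    using shift_mat_eq_0_if_odd[of u v a] shift_mat_eq_0_if_odd[of q u b]
      shift_mat_eq_0_if_odd[of "-1 - v" q c] assms by fastforce
  then show ?thesis
    by (simp only: sum_distrib_left sum.neutral_const)
qed

lemma shift_mat_reflect4_eq_0:
  assumes "even (a + b + c + d)"
  shows "(\<Sum>v\<in>idx n.
      mat_mul n (shift_mat a) (mat_mul n (shift_mat b) (mat_mul n (shift_mat c) (shift_mat d))) v (-1 - v))
    = 0"
proof -
  have "shift_mat a v u * (shift_mat b u q * (shift_mat c q r * shift_mat d r (-1 - v))) = 0" for v u q r
    using shift_mat_eq_0_if_odd[of u v a] shift_mat_eq_0_if_odd[of q u b]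
      shift_mat_eq_0_if_odd[of r q c] shift_mat_eq_0_if_odd[of "-1 - v" r d] assms by fastforce
  then show ?thesis
    by (simp only: sum_distrib_left sum.neutral_const)
qed

lemma shift_mat_closed3_eq_0:
  assumes "\<forall>x\<in>{a, -a}. \<forall>y\<in>{b, -b}. \<forall>z\<in>{c, -c}. x + y + z \<noteq> 0"
  shows "(\<Sum>v\<in>idx n. mat_mul n (shift_mat a) (mat_mul n (shift_mat b) (shift_mat c)) v v) = 0"
proof -
  have "shift_mat a v u * (shift_mat b u q * shift_mat c q v) = 0" for v u q
    using assms unfolding shift_mat_def by auto
  then show ?thesis
    by (simp only: sum_distrib_left sum.neutral_const)
qed

lemma sum_of_bool_shift_mem:
  fixes F :: "int \<Rightarrow> real"
  shows "(\<Sum>v\<in>{a..<b}. of_bool (v + c \<in> {lo..<hi}) * F v) = (\<Sum>v\<in>{max a (lo - c)..<min b (hi - c)}. F v)"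
proof -
  have "{a..<b} \<inter> {v. v + c \<in> {lo..<hi}} = {max a (lo - c)..<min b (hi - c)}"
    by auto
  then show ?thesis
    by (simp only: sum_of_bool_mult_eq finite_atLeastLessThan_int)
qed

lemma sum_of_bool_double_eq:
  fixes lo hi e :: int
  shows "(\<Sum>v\<in>{lo..<hi}. of_bool (2 * v = e) :: real) = of_bool (even e \<and> 2 * lo \<le> e \<and> e < 2 * hi)"
proof -
  have "{lo..<hi} \<inter> {v. 2 * v = e} = (if even e \<and> 2 * lo \<le> e \<and> e < 2 * hi then {e div 2} else {})"
    by auto
  then show ?thesis
    by simp
qed

(* The arguments below are written in the normal form produced by diff_conv_add_uminus and
  add.assoc, which is how they occur when walk_count_simps expands a walk sum. *)

lemma shift_mat_diag: "shift_mat d v v = of_bool (d = 0) + of_bool (- d = 0)"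
  unfolding shift_mat_def by auto

lemma shift_mat_add_left: "shift_mat d (v + c) v = of_bool (c + d = 0) + of_bool (c - d = 0)"
  unfolding shift_mat_def by auto

lemma shift_mat_reflect: "shift_mat d v (- 1 + - v) = of_bool (2 * v = -1 - d) + of_bool (2 * v = -1 + d)"
  unfolding shift_mat_def by auto

lemma shift_mat_add_reflect:
  "shift_mat d (v + c) (- 1 + - v) = of_bool (2 * v = -1 - c - d) + of_bool (2 * v = -1 - c + d)"
  unfolding shift_mat_def by auto

lemmas walk_count_simps =
  sum_shift_mat_mult diff_conv_add_uminus add.assoc
  shift_mat_diag shift_mat_add_left shift_mat_reflect shift_mat_add_reflect
  distrib_left distrib_right sum.distrib mult.assoc
  sum_of_bool_shift_mem sum_of_bool_double_eq

lemma real_nat_eq_max: "real (nat x) = max (real_of_int x) 0"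
  by simp

lemma Pi1_zero:
  assumes "N \<ge> 1"
  shows "Pi1 N 0 = real N"
  using assms unfolding Pi1_eq_trace trace1_cos_mat
  by (simp only: walk_count_simps)
     (simp add: pp_def real_nat_eq_max of_int_max of_int_min)

lemma Pi2_zero_zero:
  assumes "N \<ge> 1"
  shows "Pi2 N 0 0 = real N"
  using assms unfolding Pi2_eq_trace trace2_cos_mat shift_mat_reflect2_eq_0[of 0 0, simplified]
  by (simp only: walk_count_simps)
     (simp add: pp_def real_nat_eq_max of_int_max of_int_min)

lemma Pi1_pos:
  assumes "N \<ge> 1" "k \<ge> 1"
  shows "Pi1 N k = - eps N k / 2"
  using assms unfolding Pi1_eq_trace trace1_cos_mat eps_def
  by (simp only: walk_count_simps)
     (simp add: pp_def real_nat_eq_max of_int_max of_int_min; auto simp: max_def min_def; presburger)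

lemma Pi2_diag:
  assumes "N \<ge> 1" "k \<ge> 1"
  shows "Pi2 N k k = of_int (pp (2 * int N - k)) / 4"
  using assms unfolding Pi2_eq_trace trace2_cos_mat shift_mat_reflect2_eq_0[of k k, simplified]
  by (simp only: walk_count_simps)
     (simp add: pp_def real_nat_eq_max of_int_max of_int_min)

lemma Pi2_offdiag:
  assumes "N \<ge> 1" "k \<ge> 1" "l \<ge> 1" "k \<noteq> l"
  shows "Pi2 N k l = - eps N (k + l) / 2"
  using assms unfolding Pi2_eq_trace trace2_cos_mat eps_def
  by (simp only: walk_count_simps)
     (simp add: pp_def real_nat_eq_max of_int_max of_int_min; auto simp: max_def min_def; presburger)

lemma Pi2_zero_pos:
  assumes "N \<ge> 1" "k \<ge> 1"
  shows "Pi2 N 0 k = - eps N k / 2"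
  using assms unfolding Pi2_eq_trace trace2_cos_mat eps_def
  by (simp only: walk_count_simps)
     (simp add: pp_def real_nat_eq_max of_int_max of_int_min; auto simp: max_def min_def; presburger)

lemma Pi3_double:
  assumes "N \<ge> 1" "l \<ge> 1"
  shows "Pi3 N (2 * l) l l = of_int (pp (2 * int N - 2 * l)) / 8"
  using assms unfolding Pi3_eq_trace trace3_cos_mat shift_mat_reflect3_eq_0[of "2 * l" l l, simplified]
  by (simp only: walk_count_simps)
     (simp add: pp_def real_nat_eq_max of_int_max of_int_min)

lemma Pi3_not_double:
  assumes "N \<ge> 1" "k \<ge> 1" "l \<ge> 1" "k \<noteq> 2 * l"
  shows "Pi3 N k l l = - (3 * eps N (k + 2 * l) + eps N k * eps N \<bar>2 * l - k\<bar>) / 8"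
proof -
  let ?mirrored =
    "\<Sum>v\<in>idx (int N). mat_mul (int N) (shift_mat k) (mat_mul (int N) (shift_mat l) (shift_mat l)) v (-1 - v)"
  have no_closed_walk: "\<forall>x\<in>{k, -k}. \<forall>y\<in>{l, -l}. \<forall>z\<in>{l, -l}. x + y + z \<noteq> 0"
    using assms by auto
  have "Pi3 N k l l = - ?mirrored / 16"
    unfolding Pi3_eq_trace trace3_cos_mat shift_mat_closed3_eq_0[OF no_closed_walk] by simp
  also have "?mirrored = 2 * (3 * eps N (k + 2 * l) + eps N k * eps N \<bar>2 * l - k\<bar>)"
  proof (cases "even k")
    case True
    then show ?thesis
      using shift_mat_reflect3_eq_0[of k l l] by (simp add: eps_def)
  next
    case False
    then obtain j where "k = 2 * j + 1"
      by (metis oddE)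
    then show ?thesis
      using assms unfolding eps_def
      by (simp only: walk_count_simps) (auto simp: of_bool_def max_def min_def abs_if; presburger)
  qed
  finally show ?thesis
    by simp
qed

lemma Pi3_add:
  assumes "N \<ge> 1" "k \<ge> 1" "l \<ge> 1"
  shows "Pi3 N k l (k + l) = of_int (pp (int N - k - l)) / 4
          + of_int (alpha N (k + l) l (k + l) + alpha N (k + l) k (k + l)) / 8"
  using assms unfolding Pi3_eq_trace trace3_cos_mat shift_mat_reflect3_eq_0[of k l "k + l", simplified]
    alpha_def
  by (simp only: walk_count_simps)
     (simp add: pp_def real_nat_eq_max of_int_max of_int_min; auto simp: max_def min_def; presburger)

lemma Pi3_zero:
  assumes "N \<ge> 1" "k \<ge> 1"
  shows "Pi3 N 0 k k = of_int (pp (2 * int N - k)) / 4"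
  using assms unfolding Pi3_eq_trace trace3_cos_mat shift_mat_reflect3_eq_0[of 0 k k, simplified]
  by (simp only: walk_count_simps)
     (simp add: pp_def real_nat_eq_max of_int_max of_int_min)

lemma Pi4_diag:
  assumes "N \<ge> 1" "k \<ge> 1"
  shows "Pi4 N k k k k = of_int (pp (int N - k)) / 4 + of_int (pp (2 * int N - k)) / 16"
  using assms unfolding Pi4_eq_trace trace4_cos_mat shift_mat_reflect4_eq_0[of k k k k, simplified]
  by (simp only: walk_count_simps)
     (simp add: pp_def real_nat_eq_max of_int_max of_int_min, auto simp: max_def min_def)

lemma Pi4_kkll:
  assumes "N \<ge> 1" "k \<ge> 1" "l \<ge> 1" "k \<noteq> l"
  shows "Pi4 N k k l l = of_int (pp (int N - max k l) + pp (int N - k - l)) / 8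
          + of_int (alpha N (min k l) (max k l) (max k l)) / 16
          + of_int (alpha N (k + l) l (k + l) + alpha N (k + l) k (k + l)
                    + alpha N l (l - k) l + alpha N k (k - l) k) / 16"
  using assms unfolding Pi4_eq_trace trace4_cos_mat shift_mat_reflect4_eq_0[of k k l l, simplified]
    alpha_def
  by (simp only: walk_count_simps)
     (simp add: pp_def real_nat_eq_max of_int_max of_int_min field_simps,
      simp add: max_def min_def split: if_splits)

lemma Pi4_klkl:
  assumes "N \<ge> 1" "k \<ge> 1" "l \<ge> 1" "k \<noteq> l"
  shows "Pi4 N k l k l = of_int (pp (int N - k - l)) / 4
          + of_int (alpha N (k + l) (min k l) (k + l)) / 4
          + of_int (alpha N k k (k + l) + alpha N l l (k + l)) / 8"
  using assms unfolding Pi4_eq_trace trace4_cos_mat shift_mat_reflect4_eq_0[of k l k l, simplified]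
    alpha_def
  by (simp only: walk_count_simps)
     (simp add: pp_def real_nat_eq_max of_int_max of_int_min field_simps,
      simp add: max_def min_def split: if_splits)

theorem lemma5:
  fixes N :: nat
  assumes "N \<ge> 1"
  shows "Pi1 N 0 = real N \<and> Pi2 N 0 0 = real N \<and>
    (\<forall>k l :: int. k \<ge> 1 \<longrightarrow> l \<ge> 1 \<longrightarrow>
      Pi1 N k = - eps N k / 2 \<and>
      (k = l \<longrightarrow> Pi2 N k l = of_int (pp (2 * int N - k)) / 4) \<and>
      (k \<noteq> l \<longrightarrow> Pi2 N k l = - eps N (k + l) / 2) \<and>
      Pi2 N 0 k = - eps N k / 2 \<and>
      (k = 2 * l \<longrightarrow> Pi3 N k l l = of_int (pp (2 * int N - k)) / 8) \<and>
      (k \<noteq> 2 * l \<longrightarrow> Pi3 N k l l = - (3 * eps N (k + 2 * l) + eps N k * eps N \<bar>2 * l - k\<bar>) / 8) \<and>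
      Pi3 N k l (k + l) = of_int (pp (int N - k - l)) / 4
          + of_int (alpha N (k + l) l (k + l) + alpha N (k + l) k (k + l)) / 8 \<and>
      Pi3 N 0 k k = of_int (pp (2 * int N - k)) / 4 \<and>
      Pi4 N k k k k = of_int (pp (int N - k)) / 4 + of_int (pp (2 * int N - k)) / 16 \<and>
      (k \<noteq> l \<longrightarrow>
        Pi4 N k k l l = of_int (pp (int N - max k l) + pp (int N - k - l)) / 8
          + of_int (alpha N (min k l) (max k l) (max k l)) / 16
          + of_int (alpha N (k + l) l (k + l) + alpha N (k + l) k (k + l)
                    + alpha N l (l - k) l + alpha N k (k - l) k) / 16) \<and>
      (k \<noteq> l \<longrightarrow>
        Pi4 N k l k l = of_int (pp (int N - k - l)) / 4
          + of_int (alpha N (k + l) (min k l) (k + l)) / 4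
          + of_int (alpha N k k (k + l) + alpha N l l (k + l)) / 8))"
  using Pi1_zero[OF assms] Pi2_zero_zero[OF assms] Pi1_pos[OF assms] Pi2_diag[OF assms]
    Pi2_offdiag[OF assms] Pi2_zero_pos[OF assms] Pi3_double[OF assms] Pi3_not_double[OF assms]
    Pi3_add[OF assms] Pi3_zero[OF assms] Pi4_diag[OF assms] Pi4_kkll[OF assms] Pi4_klkl[OF assms]
  by auto

end
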